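(* Let $p\in[0,1]$ and let $\{G_n\}$ be a sequence of graphs with a converging giant (with respect to $\mu$ and $p$), $G_n$ having $n$ vertices, and let $v$ be a uniformly random vertex. If $\zeta(p)>0$ then $\lim_{k\to\infty}\limsup_{n\to\infty}\mathbb P(v\notin C_1,\ |C(v)|\ge k)=0$; if $\zeta(p)=0$ then $\lim_{k\to\infty}\limsup_{n\to\infty}\mathbb P(|C(v)|\ge k)=0$. Moreover, for two independent uniformly random vertices $u,v$, $\lim_{k\to\infty}\limsup_{n\to\infty}\mathbb P\big(|C(u)|\ge k,\ |C(v)|\ge k,\ C(u)\ne C(v)\big)=0$. Probabilities are over the graph, percolation and the choice of vertices.
   Context: $\mathcal G_*$: rooted connected locally finite graphs up to root-preserving isomorphism; $\{G_n\}$ converges in probability in the local weak sense to $\mu$ on $\mathcal G_*$ if $\frac1{|V(G_n)|}\sum_vf(G_n,v)\to\int f\,d\mu$ in probability for every bounded $f$ depending only on a bounded-radius ball around the root. $G(p)$ is bond percolation with retention probability $p$, $C(v)$ is the component of $v$ in $G_n(p)$, $C_1$ the largest component of $G_n(p)$, and $\zeta(p)=\int\mathbb P_{G(p)}(|C(o)|=\infty)\,d\mu$. A sequence $\{G_n\}$ of (possibly random) graphs converging in probability in the local weak sense to $\mu$ has a converging giant if $|C_1|/n\to\zeta(p)$ in probability. *)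

theory Defs
  imports "HOL-Probability.Probability"
begin

text \<open>Rooted graphs (elements of G_*) are
  represented by pairs (E, rt); the rooted graph meant is the component of rt.\<close>

type_synonym graph = "nat \<Rightarrow> nat \<Rightarrow> bool"
type_synonym perc_cfg = "nat \<times> nat \<Rightarrow> bool"

definition simple_graph :: "graph \<Rightarrow> bool" where
  "simple_graph E \<longleftrightarrow> (\<forall>x y. E x y \<longrightarrow> E y x) \<and> (\<forall>x. \<not> E x x)"

definition locally_finite :: "graph \<Rightarrow> bool" where
  "locally_finite E \<longleftrightarrow> (\<forall>x. finite {y. E x y})"

definition graph_on :: "nat \<Rightarrow> graph \<Rightarrow> bool" where
  "graph_on n E \<longleftrightarrow> simple_graph E \<and> (\<forall>x y. E x y \<longrightarrow> x < n \<and> y < n)"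

definition ball :: "nat \<Rightarrow> graph \<Rightarrow> nat \<Rightarrow> nat set" where
  "ball r E rt = {w. \<exists>m\<le>r. (E ^^ m) rt w}"

definition ball_iso :: "nat \<Rightarrow> graph \<times> nat \<Rightarrow> graph \<times> nat \<Rightarrow> bool" where
  "ball_iso r G H \<longleftrightarrow> (case G of (E, a) \<Rightarrow> case H of (E', b) \<Rightarrow>
     (\<exists>h. bij_betw h (ball r E a) (ball r E' b) \<and> h a = b \<and>
          (\<forall>x\<in>ball r E a. \<forall>y\<in>ball r E a. E x y \<longleftrightarrow> E' (h x) (h y))))"

definition local_fun :: "nat \<Rightarrow> (graph \<times> nat \<Rightarrow> real) \<Rightarrow> bool" where
  "local_fun r f \<longleftrightarrow> (\<forall>G H. ball_iso r G H \<longrightarrow> f G = f H)"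

definition rg_space :: "(graph \<times> nat) measure" where
  "rg_space = (PiM UNIV (\<lambda>_::nat. PiM UNIV (\<lambda>_::nat. count_space (UNIV :: bool set))))
               \<Otimes>\<^sub>M count_space UNIV"

definition perc :: "graph \<Rightarrow> perc_cfg \<Rightarrow> graph" where
  "perc E \<omega> x y \<longleftrightarrow> E x y \<and> \<omega> (min x y, max x y)"

definition cluster :: "graph \<Rightarrow> perc_cfg \<Rightarrow> nat \<Rightarrow> nat set" where
  "cluster E \<omega> v = {w. (perc E \<omega>)\<^sup>*\<^sup>* v w}"

definition perc_pmf :: "nat \<Rightarrow> real \<Rightarrow> perc_cfg pmf" where
  "perc_pmf n p = Pi_pmf {(x, y). x < y \<and> y < n} False (\<lambda>_. bernoulli_pmf p)"

definition perc_measure :: "real \<Rightarrow> perc_cfg measure" where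
  "perc_measure p = PiM UNIV (\<lambda>_::nat \<times> nat. measure_pmf (bernoulli_pmf p))"

text \<open>zeta(p) = integral over mu of P(|C(o)| = infinity), written via the joint law.\<close>
definition zeta :: "(graph \<times> nat) measure \<Rightarrow> real \<Rightarrow> real" where
  "zeta \<mu> p = measure (\<mu> \<Otimes>\<^sub>M perc_measure p)
                 {((E, rt), \<omega>). infinite (cluster E \<omega> rt)}"

definition lwc_in_prob :: "(nat \<Rightarrow> graph pmf) \<Rightarrow> (graph \<times> nat) measure \<Rightarrow> bool" where
  "lwc_in_prob Gs \<mu> \<longleftrightarrow>
     (\<forall>r f. local_fun r f \<and> f \<in> borel_measurable rg_space \<and> bounded (range f) \<longrightarrow>
        (\<forall>\<epsilon>>0. (\<lambda>n. measure_pmf.prob (Gs n)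
            {E. \<bar>(\<Sum>v<n. f (E, v)) / real n - (\<integral>x. f x \<partial>\<mu>)\<bar> > \<epsilon>}) \<longlonglongrightarrow> 0))"

definition perc_exp :: "(nat \<Rightarrow> graph pmf) \<Rightarrow> real \<Rightarrow> nat \<Rightarrow> (graph \<times> perc_cfg) pmf" where
  "perc_exp Gs p n = bind_pmf (Gs n) (\<lambda>E. map_pmf (\<lambda>\<omega>. (E, \<omega>)) (perc_pmf n p))"

definition is_largest_cluster :: "nat \<Rightarrow> graph \<Rightarrow> perc_cfg \<Rightarrow> nat set \<Rightarrow> bool" where
  "is_largest_cluster n E \<omega> C \<longleftrightarrow>
     (\<exists>v<n. C = cluster E \<omega> v) \<and> (\<forall>w<n. card (cluster E \<omega> w) \<le> card C)"

definition converging_giant ::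
  "(nat \<Rightarrow> graph pmf) \<Rightarrow> (graph \<times> nat) measure \<Rightarrow> real
     \<Rightarrow> (nat \<Rightarrow> graph \<Rightarrow> perc_cfg \<Rightarrow> nat set) \<Rightarrow> bool" where
  "converging_giant Gs \<mu> p C1 \<longleftrightarrow> lwc_in_prob Gs \<mu> \<and>
     (\<forall>\<epsilon>>0. (\<lambda>n. measure_pmf.prob (perc_exp Gs p n)
         {(E, \<omega>). \<bar>real (card (C1 n E \<omega>)) / real n - zeta \<mu> p\<bar> > \<epsilon>}) \<longlonglongrightarrow> 0)"

end

theory Submission
  imports Defs
begin

text \<open>Whether k \<le> |C(v)| holds is decided by breadth-first exploration within distance
  k - 1 of v, so P(k \<le> |C(v)|) is a bounded function of the rooted ball of radius k. Local weak
  convergence therefore bounds the fraction of vertices with k \<le> |C(v)| by the \<mu>-average of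
  this function plus o(1), and that average is at most \<zeta>_k = P(k \<le> |C(o)|), which
  decreases to \<zeta>. The giant holds a fraction \<zeta> of the vertices and, when \<zeta> > 0, eventually
  has at least k of them, so all its vertices have large clusters; hence the roots outside the
  giant with a large cluster have mass at most \<zeta>_k - \<zeta> + o(1). Two distinct large clusters
  put one of two independent roots outside the giant, or, when \<zeta> = 0, simply in a large
  cluster.\<close>

section \<open>Reachability and balls\<close>

lemma rtranclp_leaves_set:
  assumes "R\<^sup>*\<^sup>* x y" "x \<in> A" "y \<notin> A"
  shows "\<exists>a b. a \<in> A \<and> b \<notin> A \<and> R a b"
  using assms by (induction rule: rtranclp_induct) auto

lemma relpowp_closed:
  assumes "a \<in> B" "\<And>x y. R x y \<Longrightarrow> y \<in> B" "(R ^^ m) a w"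
  shows "w \<in> B"
  using assms(3)
proof (induction m arbitrary: w)
  case 0 then show ?case using assms(1) by simp
next
  case (Suc m) then show ?case using assms(2) by (auto simp: relpowp_Suc_right)
qed

lemma card_reachable_within_ge:
  assumes fin: "finite {w. R\<^sup>*\<^sup>* v w}"
  shows "min (Suc j) (card {w. R\<^sup>*\<^sup>* v w}) \<le> card {w. \<exists>m\<le>j. (R ^^ m) v w}"
proof (induction j)
  case 0
  have "{w. \<exists>m\<le>0. (R ^^ m) v w} = {v}" by auto
  then show ?case by simp
next
  case (Suc j)
  let ?C = "{w. R\<^sup>*\<^sup>* v w}"
  let ?D = "\<lambda>j. {w. \<exists>m\<le>j. (R ^^ m) v w}"
  have sub: "?D i \<subseteq> ?C" for i by (auto intro: relpowp_imp_rtranclp)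
  have mono: "?D j \<subseteq> ?D (Suc j)" by (auto intro: le_SucI)
  have finD: "finite (?D i)" for i using sub fin finite_subset by blast
  show ?case
  proof (cases "?D j = ?C")
    case True
    then have "?D (Suc j) = ?C" using sub[of "Suc j"] mono by auto
    then show ?thesis by simp
  next
    txt \<open>Some edge leaves the explored ball, so the next layer adds a new vertex.\<close>
    case False
    then obtain w where w: "w \<in> ?C" "w \<notin> ?D j" using sub by blast
    have "v \<in> ?D j" by (auto intro: exI[of _ 0])
    then obtain a b where ab: "a \<in> ?D j" "b \<notin> ?D j" "R a b"
      using rtranclp_leaves_set[of R v w "?D j"] w by auto
    then obtain m where m: "m \<le> j" "(R ^^ m) v a" by auto
    have "(R ^^ Suc m) v b" using m ab by (auto simp: relpowp_Suc_right)
    then have "insert b (?D j) \<subseteq> ?D (Suc j)" using m mono by (auto intro!: exI[of _ "Suc m"])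
    then have "Suc (card (?D j)) \<le> card (?D (Suc j))"
      using ab finD card_mono[of "?D (Suc j)" "insert b (?D j)"] by simp
    then show ?thesis using Suc by linarith
  qed
qed

lemma relpowp_bij_betw_iff:
  assumes bij: "bij_betw h B B'" and a: "a \<in> B"
    and RB: "\<And>x y. R x y \<Longrightarrow> x \<in> B \<and> y \<in> B"
    and RB': "\<And>x y. R' x y \<Longrightarrow> x \<in> B' \<and> y \<in> B'"
    and corr: "\<And>x y. x \<in> B \<Longrightarrow> y \<in> B \<Longrightarrow> R x y \<longleftrightarrow> R' (h x) (h y)"
  shows "(R' ^^ m) (h a) z \<longleftrightarrow> (\<exists>w. (R ^^ m) a w \<and> z = h w)"
proof (induction m arbitrary: z)
  case 0 then show ?case by auto
next
  case (Suc m)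
  have inB: "(R ^^ m) a w \<Longrightarrow> w \<in> B" for w using relpowp_closed[OF a, of R m w] RB by blast
  have "(R' ^^ Suc m) (h a) z \<longleftrightarrow> (\<exists>u. (R' ^^ m) (h a) u \<and> R' u z)"
    by (auto simp: relpowp_Suc_right)
  also have "\<dots> \<longleftrightarrow> (\<exists>w. (R ^^ m) a w \<and> R' (h w) z)" using Suc by auto
  also have "\<dots> \<longleftrightarrow> (\<exists>w y. (R ^^ m) a w \<and> R w y \<and> z = h y)"
  proof
    assume "\<exists>w. (R ^^ m) a w \<and> R' (h w) z"
    then obtain w where w: "(R ^^ m) a w" "R' (h w) z" by blast
    then have "z \<in> B'" using RB' by blast
    then obtain y where y: "y \<in> B" "z = h y" using bij by (auto simp: bij_betw_def)
    then show "\<exists>w y. (R ^^ m) a w \<and> R w y \<and> z = h y" using w corr inB by blast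
  next
    assume "\<exists>w y. (R ^^ m) a w \<and> R w y \<and> z = h y"
    then show "\<exists>w. (R ^^ m) a w \<and> R' (h w) z" using corr RB by blast
  qed
  also have "\<dots> \<longleftrightarrow> (\<exists>w. (R ^^ Suc m) a w \<and> z = h w)"
    by (auto simp: relpowp_Suc_right)
  finally show ?case .
qed

lemma card_ge_or_infinite_iff: "k \<le> card C \<or> infinite C \<longleftrightarrow> (\<exists>F. finite F \<and> card F = k \<and> F \<subseteq> C)"
proof
  assume "k \<le> card C \<or> infinite C"
  then show "\<exists>F. finite F \<and> card F = k \<and> F \<subseteq> C"
    by (metis infinite_arbitrarily_large obtain_subset_with_card_n)
next
  assume "\<exists>F. finite F \<and> card F = k \<and> F \<subseteq> C"
  then show "k \<le> card C \<or> infinite C" using card_mono by blast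
qed

lemma in_ballI: "(E ^^ m) v w \<Longrightarrow> m \<le> r \<Longrightarrow> w \<in> ball r E v"
  by (auto simp: ball_def)

lemma root_in_ball: "v \<in> ball k E v"
  by (auto simp: ball_def intro!: exI[of _ 0])

lemma ball_mono: "r \<le> s \<Longrightarrow> ball r E v \<subseteq> ball s E v"
  unfolding ball_def by (auto intro: order_trans)

lemma ball_Suc_step:
  assumes "x \<in> ball r E v" "E x y"
  shows "y \<in> ball (Suc r) E v"
proof -
  obtain m where "m \<le> r" "(E ^^ m) v x" using assms(1) by (auto simp: ball_def)
  then have "(E ^^ Suc m) v y" using assms(2) by (auto simp: relpowp_Suc_right)
  then show ?thesis using \<open>m \<le> r\<close> in_ballI[of "Suc m" E v y "Suc r"] by simp
qed

lemma relpowp_eq_if_agree_on_ball: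
  assumes agree: "\<And>x y. x \<in> ball r E v \<Longrightarrow> R1 x y \<longleftrightarrow> R2 x y"
    and le: "\<And>x y. R1 x y \<Longrightarrow> E x y"
    and m: "m \<le> Suc r"
  shows "(R1 ^^ m) v w \<longleftrightarrow> (R2 ^^ m) v w"
  using m
proof (induction m arbitrary: w)
  case 0 then show ?case by simp
next
  case (Suc m)
  have "(R1 ^^ m) v u \<and> R1 u w \<longleftrightarrow> (R2 ^^ m) v u \<and> R2 u w" for u
  proof -
    have "(R1 ^^ m) v u \<Longrightarrow> u \<in> ball r E v"
      using relpowp_mono[of R1 E m v u, OF le] Suc.prems by (auto intro: in_ballI)
    then show ?thesis using Suc agree by auto
  qed
  then show ?case by (auto simp: relpowp_Suc_right)
qed

lemma finite_relpowp_image: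
  assumes "locally_finite E"
  shows "finite {w. (E ^^ m) v w}"
proof (induction m)
  case 0 then show ?case by simp
next
  case (Suc m)
  have "{w. (E ^^ Suc m) v w} = (\<Union>u\<in>{w. (E ^^ m) v w}. {y. E u y})"
    by (auto simp: relpowp_Suc_right)
  then show ?case using Suc assms by (simp add: locally_finite_def)
qed

lemma finite_ball: "locally_finite E \<Longrightarrow> finite (ball k E v)"
proof -
  assume "locally_finite E"
  moreover have "ball k E v = (\<Union>m\<in>{..k}. {w. (E ^^ m) v w})" by (auto simp: ball_def)
  ultimately show ?thesis using finite_relpowp_image by simp
qed

lemma relpowp_graph_on_less:
  assumes "graph_on n E" "(E ^^ m) v w" "v < n"
  shows "w < n"
  using assms relpowp_closed[of v "{..<n}" E m w] by (auto simp: graph_on_def)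

lemma ball_subset_graph_on: "graph_on n E \<Longrightarrow> v < n \<Longrightarrow> ball k E v \<subseteq> {..<n}"
  by (auto simp: ball_def dest: relpowp_graph_on_less)

section \<open>Clusters and their breadth-first exploration\<close>

lemma perc_imp_edge: "perc E \<omega> x y \<Longrightarrow> E x y"
  by (simp add: perc_def)

lemma cluster_subset_graph_on:
  assumes "graph_on n E" "v < n"
  shows "cluster E \<omega> v \<subseteq> {..<n}"
proof
  fix w assume "w \<in> cluster E \<omega> v"
  then obtain m where "(perc E \<omega> ^^ m) v w" by (auto simp: cluster_def rtranclp_power)
  then have "(E ^^ m) v w" using relpowp_mono[of "perc E \<omega>" E] perc_imp_edge by blast
  then show "w \<in> {..<n}" using relpowp_graph_on_less[OF assms(1) _ assms(2)] by simp
qed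

lemma cluster_eq_if_mem:
  assumes "graph_on n E" "v \<in> cluster E \<omega> w"
  shows "cluster E \<omega> v = cluster E \<omega> w"
proof -
  have "symp (perc E \<omega>)"
    using assms(1) by (auto simp: symp_def perc_def graph_on_def simple_graph_def min_def max_def)
  moreover have wv: "(perc E \<omega>)\<^sup>*\<^sup>* w v" using assms(2) by (simp add: cluster_def)
  ultimately have "(perc E \<omega>)\<^sup>*\<^sup>* v w" using symp_rtranclp sympD by metis
  then show ?thesis unfolding cluster_def using wv by (auto intro: rtranclp_trans)
qed

definition explored :: "nat \<Rightarrow> graph \<Rightarrow> perc_cfg \<Rightarrow> nat \<Rightarrow> nat set" where
  "explored k E \<omega> v = {w. \<exists>m<k. (perc E \<omega> ^^ m) v w}"

definition explored_ge :: "nat \<Rightarrow> graph \<Rightarrow> perc_cfg \<Rightarrow> nat \<Rightarrow> bool" where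
  "explored_ge k E \<omega> v \<longleftrightarrow> k \<le> card (explored k E \<omega> v) \<or> infinite (explored k E \<omega> v)"

lemma explored_subset_cluster: "explored k E \<omega> v \<subseteq> cluster E \<omega> v"
  by (auto simp: explored_def cluster_def intro: relpowp_imp_rtranclp)

lemma explored_ge_if_card_cluster:
  assumes "finite (cluster E \<omega> v)" "k \<le> card (cluster E \<omega> v)"
  shows "explored_ge k E \<omega> v"
proof (cases k)
  case 0 then show ?thesis by (simp add: explored_ge_def)
next
  case (Suc j)
  have "explored k E \<omega> v = {w. \<exists>m\<le>j. (perc E \<omega> ^^ m) v w}"
    using Suc by (auto simp: explored_def less_Suc_eq_le)
  moreover have "min (Suc j) (card (cluster E \<omega> v)) \<le> card {w. \<exists>m\<le>j. (perc E \<omega> ^^ m) v w}"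
    using card_reachable_within_ge[of "perc E \<omega>" v j] assms by (simp add: cluster_def)
  ultimately show ?thesis using assms Suc by (simp add: explored_ge_def)
qed

lemma card_cluster_ge_if_explored_ge:
  assumes "explored_ge k E \<omega> v" "finite (cluster E \<omega> v)"
  shows "k \<le> card (cluster E \<omega> v)"
proof -
  have "finite (explored k E \<omega> v)"
    using finite_subset[OF explored_subset_cluster assms(2)] .
  then have "k \<le> card (explored k E \<omega> v)" using assms(1) by (simp add: explored_ge_def)
  also have "\<dots> \<le> card (cluster E \<omega> v)" using card_mono[OF assms(2) explored_subset_cluster] .
  finally show ?thesis .
qed

lemma explored_ge_mono:
  assumes "\<And>x y. perc E \<omega> x y \<Longrightarrow> perc E' \<omega> x y" "explored_ge k E \<omega> v"
  shows "explored_ge k E' \<omega> v"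
proof -
  have "explored k E \<omega> v \<subseteq> explored k E' \<omega> v"
    unfolding explored_def using relpowp_mono[of "perc E \<omega>" "perc E' \<omega>"] assms(1) by blast
  then show ?thesis using assms(2) unfolding explored_ge_def by (meson card_mono finite_subset le_trans)
qed

section \<open>The local exploration probability\<close>

text \<open>A finite graph is encoded by its vertex set B and edge set R; percolation on it
  only uses the configuration on the edge slots of B.\<close>

definition edge_slots :: "nat set \<Rightarrow> (nat \<times> nat) set" where
  "edge_slots B = {(x, y). x < y \<and> x \<in> B \<and> y \<in> B}"

definition graph_of :: "(nat \<times> nat) set \<Rightarrow> graph" where
  "graph_of R x y \<longleftrightarrow> (x, y) \<in> R"

definition edges_within :: "nat set \<Rightarrow> graph \<Rightarrow> (nat \<times> nat) set" where
  "edges_within B E = {(x, y). x \<in> B \<and> y \<in> B \<and> E x y}"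

definition bernoulli_cfg :: "real \<Rightarrow> (nat \<times> nat) set \<Rightarrow> perc_cfg pmf" where
  "bernoulli_cfg p S = Pi_pmf S False (\<lambda>_. bernoulli_pmf p)"

definition explore_prob :: "real \<Rightarrow> nat \<Rightarrow> nat \<Rightarrow> nat set \<Rightarrow> (nat \<times> nat) set \<Rightarrow> real" where
  "explore_prob p k v B R = (if v \<in> B \<and> finite B then
      measure_pmf.prob (bernoulli_cfg p (edge_slots B)) {\<omega>. explored_ge k (graph_of R) \<omega> v} else 0)"

text \<open>P(k \<le> |C(v)|), computed in the ball of radius k around v, which decides it;
  the value 0 on infinite balls is a dummy.\<close>

definition local_explore_prob :: "real \<Rightarrow> nat \<Rightarrow> graph \<times> nat \<Rightarrow> real" where
  "local_explore_prob p k z =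
     explore_prob p k (snd z) (ball k (fst z) (snd z)) (edges_within (ball k (fst z) (snd z)) (fst z))"

lemma local_explore_prob_nonneg: "0 \<le> local_explore_prob p k z"
  by (simp add: local_explore_prob_def explore_prob_def)

lemma local_explore_prob_le_1: "local_explore_prob p k z \<le> 1"
  by (simp add: local_explore_prob_def explore_prob_def)

lemma finite_edge_slots: "finite B \<Longrightarrow> finite (edge_slots B)"
  by (rule finite_subset[of _ "B \<times> B"]) (auto simp: edge_slots_def)

lemma explored_edges_within:
  assumes loopless: "\<And>x. \<not> E x x" and B: "ball k E v \<subseteq> B"
    and agree: "\<And>x y. x \<in> B \<Longrightarrow> y \<in> B \<Longrightarrow> x < y \<Longrightarrow> \<omega>' (x, y) = \<omega> (x, y)"
  shows "explored k (graph_of (edges_within B E)) \<omega>' v = explored k E \<omega> v"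
proof (cases k)
  case 0 then show ?thesis by (simp add: explored_def)
next
  case (Suc j)
  have perc_eq: "perc E \<omega> x y \<longleftrightarrow> perc (graph_of (edges_within B E)) \<omega>' x y"
    if x: "x \<in> ball j E v" for x y
  proof (cases "E x y")
    case True
    have "y \<in> B" using ball_Suc_step[OF x True] B Suc by auto
    moreover have "x \<in> B" using x B Suc ball_mono[of j k E v] by auto
    moreover have "x \<noteq> y" using True loopless by auto
    ultimately show ?thesis
      using True agree by (cases "x < y") (auto simp: perc_def graph_of_def edges_within_def min_def max_def)
  qed (simp add: perc_def graph_of_def edges_within_def)
  have "(perc E \<omega> ^^ m) v w \<longleftrightarrow> (perc (graph_of (edges_within B E)) \<omega>' ^^ m) v w" if "m < k" for m w
    using relpowp_eq_if_agree_on_ball[of j E v "perc E \<omega>" "perc (graph_of (edges_within B E)) \<omega>'" m w]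
      perc_eq that Suc by (auto simp: perc_imp_edge)
  then show ?thesis by (auto simp: explored_def)
qed

lemma prob_card_cluster_ge_le_local:
  assumes g: "graph_on n E" and v: "v < n"
  shows "measure_pmf.prob (perc_pmf n p) {\<omega>. k \<le> card (cluster E \<omega> v)} \<le> local_explore_prob p k (E, v)"
proof -
  define B where "B = ball k E v"
  define slots where "slots = {(x, y). x < y \<and> y < n}"
  let ?restrict = "\<lambda>\<omega> x. if x \<in> edge_slots B then \<omega> x else False"
  have "finite slots" by (rule finite_subset[of _ "{..<n} \<times> {..<n}"]) (auto simp: slots_def)
  moreover have "edge_slots B \<subseteq> slots"
    using ball_subset_graph_on[OF g v] by (auto simp: B_def edge_slots_def slots_def)
  ultimately have restrict: "bernoulli_cfg p (edge_slots B) = map_pmf ?restrict (perc_pmf n p)"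
    unfolding bernoulli_cfg_def perc_pmf_def slots_def[symmetric] by (rule Pi_pmf_subset)
  have "finite B" using finite_subset[OF ball_subset_graph_on[OF g v]] by (simp add: B_def)
  moreover have "v \<in> B" by (simp add: B_def root_in_ball)
  ultimately have local_eq: "local_explore_prob p k (E, v)
      = measure_pmf.prob (perc_pmf n p) {\<omega>. explored_ge k (graph_of (edges_within B E)) (?restrict \<omega>) v}"
    by (simp add: local_explore_prob_def explore_prob_def B_def[symmetric] restrict vimage_def)
  have "explored_ge k (graph_of (edges_within B E)) (?restrict \<omega>) v"
    if k: "k \<le> card (cluster E \<omega> v)" for \<omega>
  proof -
    have "finite (cluster E \<omega> v)"
      using cluster_subset_graph_on[OF g v] finite_subset by blast
    then have "explored_ge k E \<omega> v" using explored_ge_if_card_cluster k by blast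
    moreover have "explored k (graph_of (edges_within B E)) (?restrict \<omega>) v = explored k E \<omega> v"
      using g by (intro explored_edges_within)
        (auto simp: B_def edge_slots_def graph_on_def simple_graph_def)
    ultimately show ?thesis by (simp add: explored_ge_def)
  qed
  then show ?thesis unfolding local_eq by (intro measure_pmf.finite_measure_mono subsetI) simp_all
qed

lemma bij_betw_edge_slots:
  assumes "bij_betw h B B'"
  shows "bij_betw (\<lambda>(x, y). (min (h x) (h y), max (h x) (h y))) (edge_slots B) (edge_slots B')"
proof -
  have inj: "inj_on h B" and img: "h ` B = B'" using assms by (auto simp: bij_betw_def)
  show ?thesis
  proof (rule bij_betw_imageI)
    show "inj_on (\<lambda>(x, y). (min (h x) (h y), max (h x) (h y))) (edge_slots B)"
    proof (rule inj_onI)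
      fix z z' assume z: "z \<in> edge_slots B" "z' \<in> edge_slots B"
        and eq: "(\<lambda>(x, y). (min (h x) (h y), max (h x) (h y))) z
               = (\<lambda>(x, y). (min (h x) (h y), max (h x) (h y))) z'"
      obtain x y x' y' where zz: "z = (x, y)" "z' = (x', y')" by (cases z, cases z')
      have "(h x = h x' \<and> h y = h y') \<or> (h x = h y' \<and> h y = h x')"
        using eq unfolding zz min_def max_def by (auto split: if_splits)
      then have "(x = x' \<and> y = y') \<or> (x = y' \<and> y = x')"
        using z inj_onD[OF inj] by (auto simp: zz edge_slots_def)
      then show "z = z'" using z by (auto simp: zz edge_slots_def)
    qed
    show "(\<lambda>(x, y). (min (h x) (h y), max (h x) (h y))) ` edge_slots B = edge_slots B'"
    proof safe
      fix x y assume "(x, y) \<in> edge_slots B"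
      then have "h x \<noteq> h y" "h x \<in> B'" "h y \<in> B'" using inj img by (auto simp: edge_slots_def inj_on_def)
      then show "(min (h x) (h y), max (h x) (h y)) \<in> edge_slots B'"
        by (auto simp: edge_slots_def min_def max_def)
    next
      fix x' y' assume "(x', y') \<in> edge_slots B'"
      then obtain x y where xy: "x \<in> B" "y \<in> B" "x' = h x" "y' = h y" "h x < h y"
        using img by (auto simp: edge_slots_def)
      then have "x \<noteq> y" by auto
      then have "(min x y, max x y) \<in> edge_slots B" using xy by (auto simp: edge_slots_def min_def max_def)
      moreover have "(x', y') = (\<lambda>(x, y). (min (h x) (h y), max (h x) (h y))) (min x y, max x y)"
        using xy by (cases "x < y") (auto simp: min_def max_def)
      ultimately show "(x', y') \<in> (\<lambda>(x, y). (min (h x) (h y), max (h x) (h y))) ` edge_slots B"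
        by blast
    qed
  qed
qed

lemma explored_graph_of_subset:
  assumes R: "R \<subseteq> B \<times> B" and a: "a \<in> B"
  shows "explored k (graph_of R) \<omega> a \<subseteq> B"
proof
  fix w assume "w \<in> explored k (graph_of R) \<omega> a"
  then obtain m where "(perc (graph_of R) \<omega> ^^ m) a w" by (auto simp: explored_def)
  moreover have "perc (graph_of R) \<omega> x y \<Longrightarrow> y \<in> B" for x y
    using R by (auto simp: perc_def graph_of_def)
  ultimately show "w \<in> B" using relpowp_closed[OF a] by blast
qed

lemma explored_ge_relabel:
  assumes bij: "bij_betw h B B'" and a: "a \<in> B"
    and R: "R \<subseteq> B \<times> B" and R': "R' \<subseteq> B' \<times> B'"
    and corr: "\<And>x y. x \<in> B \<Longrightarrow> y \<in> B \<Longrightarrow> (x, y) \<in> R \<longleftrightarrow> (h x, h y) \<in> R'"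
    and g: "\<And>z. z \<notin> edge_slots B' \<Longrightarrow> g z = False"
    and H_slot: "\<And>x y. x \<in> B \<Longrightarrow> y \<in> B \<Longrightarrow> x \<noteq> y \<Longrightarrow>
                   H (min x y, max x y) = (min (h x) (h y), max (h x) (h y))"
    and H_diag: "\<And>x. H (x, x) \<notin> edge_slots B'"
  shows "explored_ge k (graph_of R) (g \<circ> H) a \<longleftrightarrow> explored_ge k (graph_of R') g (h a)"
proof -
  let ?P = "perc (graph_of R) (g \<circ> H)" and ?P' = "perc (graph_of R') g"
  have PB: "?P x y \<Longrightarrow> x \<in> B \<and> y \<in> B" for x y using R by (auto simp: perc_def graph_of_def)
  have PB': "?P' x y \<Longrightarrow> x \<in> B' \<and> y \<in> B'" for x y using R' by (auto simp: perc_def graph_of_def)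
  have "?P x y \<longleftrightarrow> ?P' (h x) (h y)" if xy: "x \<in> B" "y \<in> B" for x y
  proof (cases "x = y")
    case True
    have "(h x, h x) \<notin> edge_slots B'" by (simp add: edge_slots_def)
    then show ?thesis using True g H_diag by (simp add: perc_def)
  next
    case False
    then have "H (min x y, max x y) = (min (h x) (h y), max (h x) (h y))" using H_slot xy by blast
    then show ?thesis using corr[OF xy] by (simp add: perc_def graph_of_def)
  qed
  then have "(?P' ^^ m) (h a) z \<longleftrightarrow> (\<exists>w. (?P ^^ m) a w \<and> z = h w)" for m z
    using relpowp_bij_betw_iff[OF bij a, of ?P ?P' m z] PB PB' by blast
  then have eq: "explored k (graph_of R') g (h a) = h ` explored k (graph_of R) (g \<circ> H) a"
    by (auto simp: explored_def)
  have "inj_on h (explored k (graph_of R) (g \<circ> H) a)"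
    using bij explored_graph_of_subset[OF R a] by (auto simp: bij_betw_def intro: inj_on_subset)
  then show ?thesis unfolding explored_ge_def eq by (simp add: card_image finite_image_iff)
qed

lemma explore_prob_relabel:
  assumes bij: "bij_betw h B B'" and a: "a \<in> B" and fin: "finite B"
    and R: "R \<subseteq> B \<times> B" and R': "R' \<subseteq> B' \<times> B'"
    and corr: "\<And>x y. x \<in> B \<Longrightarrow> y \<in> B \<Longrightarrow> (x, y) \<in> R \<longleftrightarrow> (h x, h y) \<in> R'"
  shows "explore_prob p k a B R = explore_prob p k (h a) B' R'"
proof -
  txt \<open>(1, 0) is not a slot, so indices off the slots of B stay off the slots of B',
    as Pi_pmf_bij_betw requires.\<close>
  define H where "H z = (if z \<in> edge_slots B then (min (h (fst z)) (h (snd z)), max (h (fst z)) (h (snd z)))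
                         else (1::nat, 0::nat))" for z
  have fin': "finite B'" using bij fin bij_betw_finite by blast
  have "bij_betw H (edge_slots B) (edge_slots B')"
    using bij_betw_edge_slots[OF bij] by (rule bij_betw_cong[THEN iffD1, rotated]) (auto simp: H_def)
  moreover have "z \<notin> edge_slots B \<Longrightarrow> H z \<notin> edge_slots B'" for z by (simp add: H_def edge_slots_def)
  ultimately have relabel: "bernoulli_cfg p (edge_slots B) = map_pmf (\<lambda>g. g \<circ> H) (bernoulli_cfg p (edge_slots B'))"
    unfolding bernoulli_cfg_def using finite_edge_slots[OF fin] by (intro Pi_pmf_bij_betw)
  have "explored_ge k (graph_of R) (g \<circ> H) a \<longleftrightarrow> explored_ge k (graph_of R') g (h a)"
    if "g \<in> set_pmf (bernoulli_cfg p (edge_slots B'))" for g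
  proof -
    have "z \<notin> edge_slots B' \<Longrightarrow> g z = False" for z
      using that set_Pi_pmf_subset[OF finite_edge_slots[OF fin'], of False "\<lambda>_. bernoulli_pmf p"]
      by (cases z) (auto simp: bernoulli_cfg_def)
    moreover have "H (min x y, max x y) = (min (h x) (h y), max (h x) (h y))"
      if "x \<in> B" "y \<in> B" "x \<noteq> y" for x y
      using that by (cases "x < y") (simp_all add: H_def edge_slots_def min_def max_def)
    moreover have "H (x, x) \<notin> edge_slots B'" for x by (simp add: H_def edge_slots_def)
    ultimately show ?thesis using bij a R R' corr by (intro explored_ge_relabel[where B = B and B' = B'])
  qed
  then have "measure_pmf.prob (bernoulli_cfg p (edge_slots B')) {g. explored_ge k (graph_of R) (g \<circ> H) a}
      = measure_pmf.prob (bernoulli_cfg p (edge_slots B')) {g. explored_ge k (graph_of R') g (h a)}"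
    by (intro measure_prob_cong_0) (auto simp: set_pmf_eq)
  then show ?thesis
    using a fin fin' bij by (auto simp: explore_prob_def relabel vimage_def bij_betw_def)
qed

lemma local_fun_local_explore_prob: "local_fun k (local_explore_prob p k)"
  unfolding local_fun_def
proof (intro allI impI)
  fix G G' :: "graph \<times> nat" assume iso: "ball_iso k G G'"
  obtain E a E' b where G: "G = (E, a)" and G': "G' = (E', b)" by (cases G, cases G')
  define B where "B = ball k E a"
  define B' where "B' = ball k E' b"
  obtain h where h: "bij_betw h B B'" "h a = b"
    "\<And>x y. x \<in> B \<Longrightarrow> y \<in> B \<Longrightarrow> E x y \<longleftrightarrow> E' (h x) (h y)"
    using iso by (auto simp: ball_iso_def G G' B_def B'_def)
  have "h x \<in> B'" if "x \<in> B" for x using h(1) that by (auto simp: bij_betw_def)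
  then have "explore_prob p k a B (edges_within B E) = explore_prob p k b B' (edges_within B' E')"
    if "finite B"
    using that h root_in_ball[of a k E]
    by (subst h(2)[symmetric], intro explore_prob_relabel)
      (auto simp: B_def edges_within_def)
  moreover have "finite B \<longleftrightarrow> finite B'" using h(1) bij_betw_finite by blast
  ultimately show "local_explore_prob p k G = local_explore_prob p k G'"
    by (auto simp: local_explore_prob_def explore_prob_def G G' B_def[symmetric] B'_def[symmetric])
qed

section \<open>Measurability\<close>

lemma space_rg_space: "space rg_space = UNIV"
  by (simp add: rg_space_def space_pair_measure space_PiM PiE_UNIV_domain)

lemma measurable_rg_edge[measurable]:
  "(\<lambda>z::graph \<times> nat. fst z x y) \<in> measurable rg_space (count_space UNIV)"
proof -
  let ?rows = "PiM UNIV (\<lambda>_::nat. count_space (UNIV :: bool set))"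
  have "(\<lambda>z::graph \<times> nat. fst z) \<in> measurable rg_space (PiM UNIV (\<lambda>_::nat. ?rows))"
    unfolding rg_space_def by simp
  moreover have "(\<lambda>E::graph. E x) \<in> measurable (PiM UNIV (\<lambda>_::nat. ?rows)) ?rows"
    by (rule measurable_component_singleton) simp
  moreover have "(\<lambda>e::nat \<Rightarrow> bool. e y) \<in> measurable ?rows (count_space UNIV)"
    by (rule measurable_component_singleton) simp
  ultimately show ?thesis using measurable_compose by fastforce
qed

lemma measurable_rg_root[measurable]:
  "(\<lambda>z::graph \<times> nat. snd z) \<in> measurable rg_space (count_space UNIV)"
  unfolding rg_space_def by measurable

lemma pred_rg_relpowp: "Measurable.pred rg_space (\<lambda>z. (fst z ^^ m) (snd z) w)"
proof (induction m arbitrary: w)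
  case 0
  have "Measurable.pred rg_space (\<lambda>z. snd z = w)" by measurable
  then show ?case by simp
next
  case (Suc m)
  have "(\<lambda>z. (fst z ^^ Suc m) (snd z) w) = (\<lambda>z. \<exists>u. (fst z ^^ m) (snd z) u \<and> fst z u w)"
    by (auto simp: relpowp_Suc_right fun_eq_iff)
  then show ?case using Suc by simp
qed

lemma pred_rg_in_ball[measurable]: "Measurable.pred rg_space (\<lambda>z. w \<in> ball k (fst z) (snd z))"
proof -
  have "(\<lambda>z. w \<in> ball k (fst z) (snd z)) = (\<lambda>z. \<exists>m\<in>{..k}. (fst z ^^ m) (snd z) w)"
    by (auto simp: ball_def fun_eq_iff)
  moreover have "Measurable.pred rg_space (\<lambda>z. \<exists>m\<in>{..k}. (fst z ^^ m) (snd z) w)"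
    using pred_rg_relpowp by measurable
  ultimately show ?thesis by simp
qed

text \<open>Measurability of local_explore_prob comes from factoring it through this
  countably-valued key.\<close>

definition ball_key :: "nat \<Rightarrow> graph \<times> nat \<Rightarrow> nat \<times> nat set \<times> (nat \<times> nat) set" where
  "ball_key k z = (if finite (ball k (fst z) (snd z)) then
     (snd z, ball k (fst z) (snd z), edges_within (ball k (fst z) (snd z)) (fst z)) else (snd z, {}, {}))"

lemma finite_edges_within: "finite B \<Longrightarrow> finite (edges_within B E)"
  by (rule finite_subset[of _ "B \<times> B"]) (auto simp: edges_within_def)

lemma ball_key_eq_iff:
  assumes "finite B0"
  shows "ball_key k z = (v0, B0, R0) \<longleftrightarrow> snd z = v0 \<and>
    (if B0 = {} then R0 = {} \<and> infinite (ball k (fst z) (snd z))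
     else ball k (fst z) (snd z) = B0 \<and> edges_within B0 (fst z) = R0)"
proof (cases "finite (ball k (fst z) (snd z))")
  case True
  then show ?thesis using root_in_ball[of "snd z" k "fst z"] by (auto simp: ball_key_def)
next
  case False
  then show ?thesis using assms by (auto simp: ball_key_def)
qed

lemma ball_key_measurable:
  "ball_key k \<in> measurable rg_space (count_space (UNIV \<times> {B. finite B} \<times> {R. finite R}))"
proof -
  have countable: "countable ((UNIV :: nat set) \<times> {B :: nat set. finite B} \<times> {R :: (nat \<times> nat) set. finite R})"
    by (intro countable_SIGMA countable_Collect_finite) auto
  show ?thesis
  proof (subst measurable_count_space_eq_countable[OF countable], intro conjI Pi_I ballI)
    fix z show "ball_key k z \<in> UNIV \<times> {B. finite B} \<times> {R. finite R}"
      by (simp add: ball_key_def finite_edges_within)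
  next
    fix key :: "nat \<times> nat set \<times> (nat \<times> nat) set"
    assume "key \<in> UNIV \<times> {B. finite B} \<times> {R. finite R}"
    then obtain v0 B0 R0 where key: "key = (v0, B0, R0)" and finB0: "finite B0" by auto
    have "ball_key k -` {key} \<inter> space rg_space = {z. snd z = v0 \<and>
        (if B0 = {} then R0 = {} \<and> infinite (ball k (fst z) (snd z))
         else ball k (fst z) (snd z) = B0 \<and> edges_within B0 (fst z) = R0)}"
      by (rule set_eqI) (simp add: space_rg_space key ball_key_eq_iff[OF finB0])
    also have "\<dots> \<in> sets rg_space"
    proof (cases "B0 = {}")
      case True
      have "{z \<in> space rg_space. snd z = v0 \<and> R0 = {} \<and> (\<forall>N. \<exists>w\<ge>N. w \<in> ball k (fst z) (snd z))}
          \<in> sets rg_space"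
        by measurable
      then show ?thesis using True by (simp add: infinite_nat_iff_unbounded_le space_rg_space)
    next
      case False
      have "{z \<in> space rg_space. snd z = v0 \<and> (\<forall>w. w \<in> ball k (fst z) (snd z) \<longleftrightarrow> w \<in> B0)
          \<and> (\<forall>x y. (x, y) \<in> R0 \<longleftrightarrow> x \<in> B0 \<and> y \<in> B0 \<and> fst z x y)} \<in> sets rg_space"
        by measurable
      moreover have "edges_within B0 E = R0 \<longleftrightarrow> (\<forall>x y. (x, y) \<in> R0 \<longleftrightarrow> x \<in> B0 \<and> y \<in> B0 \<and> E x y)" for E
        by (auto simp: edges_within_def)
      moreover have "A = B0 \<longleftrightarrow> (\<forall>w. w \<in> A \<longleftrightarrow> w \<in> B0)" for A :: "nat set"
        by blast
      ultimately show ?thesis using False by (simp only: space_rg_space UNIV_I simp_thms if_False)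
    qed
    finally show "ball_key k -` {key} \<inter> space rg_space \<in> sets rg_space" .
  qed
qed

lemma local_explore_prob_measurable: "local_explore_prob p k \<in> borel_measurable rg_space"
proof -
  have "local_explore_prob p k = (\<lambda>z. (\<lambda>(v, B, R). explore_prob p k v B R) (ball_key k z))"
    by (simp add: fun_eq_iff local_explore_prob_def ball_key_def explore_prob_def)
  moreover have "(\<lambda>z. (\<lambda>(v, B, R). explore_prob p k v B R) (ball_key k z)) \<in> borel_measurable rg_space"
    by (rule measurable_compose[OF ball_key_measurable]) simp
  ultimately show ?thesis by simp
qed

section \<open>Percolation on the limit graph\<close>

lemma prob_space_perc_measure: "prob_space (perc_measure p)"
proof -
  interpret product_prob_space "\<lambda>_::nat \<times> nat. measure_pmf (bernoulli_pmf p)" UNIV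
    by (intro product_prob_spaceI) (simp add: measure_pmf.prob_space_axioms)
  show ?thesis unfolding perc_measure_def by (rule P.prob_space_axioms)
qed

lemma space_perc_measure: "space (perc_measure p) = UNIV"
  by (simp add: perc_measure_def space_PiM PiE_UNIV_domain)

lemma measurable_perc_component[measurable]:
  "(\<lambda>\<omega>. \<omega> x) \<in> measurable (perc_measure p) (count_space UNIV)"
proof -
  have "(\<lambda>\<omega>. \<omega> x) \<in> measurable (perc_measure p) (measure_pmf (bernoulli_pmf p))"
    unfolding perc_measure_def by (rule measurable_component_singleton) simp
  moreover have "sets (measure_pmf (bernoulli_pmf p)) = sets (count_space UNIV)" by simp
  ultimately show ?thesis using measurable_cong_sets[OF refl] by blast
qed

lemma measure_perc_measure_cylinder:
  assumes fin: "finite S" and off: "\<And>x. x \<notin> S \<Longrightarrow> \<not> g x"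
  shows "measure (perc_measure p) {\<omega>. \<forall>x\<in>S. \<omega> x = g x} = pmf (bernoulli_cfg p S) g"
proof -
  interpret product_prob_space "\<lambda>_::nat \<times> nat. measure_pmf (bernoulli_pmf p)" UNIV
    by (intro product_prob_spaceI) (simp add: measure_pmf.prob_space_axioms)
  have "emeasure (perc_measure p) {\<omega>. \<forall>x\<in>S. \<omega> x = g x}
      = emeasure (perc_measure p) {\<omega> \<in> space (perc_measure p). \<forall>x\<in>S. \<omega> x \<in> {g x}}"
    by (simp add: space_perc_measure)
  also have "\<dots> = (\<Prod>x\<in>S. emeasure (measure_pmf (bernoulli_pmf p)) {g x})"
    unfolding perc_measure_def using fin by (intro emeasure_PiM_Collect) auto
  also have "\<dots> = ennreal (pmf (bernoulli_cfg p S) g)"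
    using fin off by (simp add: emeasure_pmf_single prod_ennreal bernoulli_cfg_def pmf_Pi')
  finally show ?thesis by (simp add: measure_def)
qed

lemma Collect_eq_Union_cylinders:
  fixes P :: "('a \<Rightarrow> bool) \<Rightarrow> bool"
  assumes dep: "\<And>\<omega> \<omega>'. (\<forall>x\<in>S. \<omega> x = \<omega>' x) \<Longrightarrow> P \<omega> = P \<omega>'"
  shows "{\<omega>. P \<omega>} = (\<Union>g\<in>{g \<in> PiE_dflt S False (\<lambda>_. UNIV). P g}. {\<omega>. \<forall>x\<in>S. \<omega> x = g x})"
proof safe
  fix \<omega> assume "P \<omega>"
  define g where "g x = (x \<in> S \<and> \<omega> x)" for x
  have "P g" using dep[of g \<omega>] \<open>P \<omega>\<close> by (simp add: g_def)
  then have "g \<in> {g \<in> PiE_dflt S False (\<lambda>_. UNIV). P g}" by (simp add: PiE_dflt_def g_def)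
  moreover have "\<forall>x\<in>S. \<omega> x = g x" by (simp add: g_def)
  ultimately show "\<omega> \<in> (\<Union>g\<in>{g \<in> PiE_dflt S False (\<lambda>_. UNIV). P g}. {\<omega>. \<forall>x\<in>S. \<omega> x = g x})"
    by blast
next
  fix \<omega> g assume "g \<in> PiE_dflt S False (\<lambda>_. UNIV)" "P g" "\<forall>x\<in>S. \<omega> x = g x"
  then show "P \<omega>" using dep[of \<omega> g] by auto
qed

lemma measure_perc_measure_eq_bernoulli_cfg:
  assumes fin: "finite S"
    and dep: "\<And>\<omega> \<omega>'. (\<forall>x\<in>S. \<omega> x = \<omega>' x) \<Longrightarrow> P \<omega> = P \<omega>'"
  shows "measure (perc_measure p) {\<omega>. P \<omega>} = measure_pmf.prob (bernoulli_cfg p S) {\<omega>. P \<omega>}"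
proof -
  interpret prob_space "perc_measure p" by (rule prob_space_perc_measure)
  define G where "G = {g \<in> PiE_dflt S False (\<lambda>_. UNIV). P g}"
  define cyl where "cyl g = {\<omega>. \<forall>x\<in>S. \<omega> x = g x}" for g :: perc_cfg
  have finG: "finite G" unfolding G_def using fin by (intro finite_subset[OF _ finite_PiE_dflt]) auto
  have off: "g \<in> G \<Longrightarrow> x \<notin> S \<Longrightarrow> \<not> g x" for g x by (cases x) (auto simp: G_def PiE_dflt_def)
  have cyl_sets: "cyl g \<in> sets (perc_measure p)" for g
  proof -
    have "{\<omega> \<in> space (perc_measure p). \<forall>x\<in>S. \<omega> x = g x} \<in> sets (perc_measure p)"
      using fin by measurable
    then show ?thesis by (simp add: cyl_def space_perc_measure)
  qed
  have "{\<omega>. P \<omega>} = (\<Union>g\<in>G. cyl g)"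
    unfolding G_def cyl_def using dep by (rule Collect_eq_Union_cylinders)
  moreover have "disjoint_family_on cyl G"
  proof (unfold disjoint_family_on_def, intro ballI impI)
    fix g g' assume "g \<in> G" "g' \<in> G" "g \<noteq> g'"
    then obtain x where "g x \<noteq> g' x" by (auto simp: fun_eq_iff)
    moreover have "x \<in> S" using calculation off[OF \<open>g \<in> G\<close>] off[OF \<open>g' \<in> G\<close>] by blast
    ultimately show "cyl g \<inter> cyl g' = {}" by (auto simp: cyl_def)
  qed
  ultimately have "measure (perc_measure p) {\<omega>. P \<omega>} = (\<Sum>g\<in>G. measure (perc_measure p) (cyl g))"
    using finite_measure_finite_Union[OF finG] cyl_sets by auto
  also have "\<dots> = (\<Sum>g\<in>G. pmf (bernoulli_cfg p S) g)"
  proof (rule sum.cong)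
    fix g assume "g \<in> G"
    show "measure (perc_measure p) (cyl g) = pmf (bernoulli_cfg p S) g"
      unfolding cyl_def by (rule measure_perc_measure_cylinder[OF fin off[OF \<open>g \<in> G\<close>]])
  qed simp
  also have "\<dots> = measure_pmf.prob (bernoulli_cfg p S) G"
    by (simp add: measure_measure_pmf_finite finG)
  also have "\<dots> = measure_pmf.prob (bernoulli_cfg p S) {\<omega>. P \<omega>}"
  proof (rule measure_prob_cong_0)
    fix \<omega> assume "\<omega> \<in> {\<omega>. P \<omega>} - G"
    then have "\<exists>x. x \<notin> S \<and> \<omega> x" by (auto simp: G_def PiE_dflt_def)
    then show "pmf (bernoulli_cfg p S) \<omega> = 0"
      unfolding bernoulli_cfg_def using fin by (intro pmf_Pi_outside) auto
  qed (auto simp: G_def)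
  finally show ?thesis .
qed

definition rooted_perc_space :: "real \<Rightarrow> ((graph \<times> nat) \<times> perc_cfg) measure" where
  "rooted_perc_space p = rg_space \<Otimes>\<^sub>M perc_measure p"

lemma space_rooted_perc_space: "space (rooted_perc_space p) = UNIV"
  by (simp add: rooted_perc_space_def space_pair_measure space_rg_space space_perc_measure)

lemma pred_rooted_perc_in_cluster:
  "Measurable.pred (rooted_perc_space p) (\<lambda>z. w \<in> cluster (fst (fst z)) (snd z) (snd (fst z)))"
proof -
  have [measurable]: "Measurable.pred (rooted_perc_space p) (\<lambda>z. perc (fst (fst z)) (snd z) x y)" for x y
    unfolding perc_def rooted_perc_space_def by measurable
  have "Measurable.pred (rooted_perc_space p) (\<lambda>z. (perc (fst (fst z)) (snd z) ^^ m) (snd (fst z)) w)"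
    for m w
  proof (induction m arbitrary: w)
    case 0
    have "Measurable.pred (rooted_perc_space p) (\<lambda>z. snd (fst z) = w)"
      unfolding rooted_perc_space_def by measurable
    then show ?case by simp
  next
    case (Suc m)
    have "(\<lambda>z. (perc (fst (fst z)) (snd z) ^^ Suc m) (snd (fst z)) w) =
          (\<lambda>z. \<exists>u. (perc (fst (fst z)) (snd z) ^^ m) (snd (fst z)) u \<and> perc (fst (fst z)) (snd z) u w)"
      by (auto simp: relpowp_Suc_right fun_eq_iff)
    then show ?case using Suc by simp
  qed
  moreover have "(\<lambda>z. w \<in> cluster (fst (fst z)) (snd z) (snd (fst z))) =
      (\<lambda>z. \<exists>m. (perc (fst (fst z)) (snd z) ^^ m) (snd (fst z)) w)"
    by (simp add: cluster_def rtranclp_power fun_eq_iff)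
  ultimately show ?thesis by simp
qed

definition large_cluster_event :: "nat \<Rightarrow> ((graph \<times> nat) \<times> perc_cfg) set" where
  "large_cluster_event k = {((E, rt), \<omega>). k \<le> card (cluster E \<omega> rt) \<or> infinite (cluster E \<omega> rt)}"

lemma large_cluster_event_sets: "large_cluster_event k \<in> sets (rooted_perc_space p)"
proof -
  have "large_cluster_event k = {z \<in> space (rooted_perc_space p).
      \<exists>F\<in>{F. finite F \<and> card F = k}. \<forall>w\<in>F. w \<in> cluster (fst (fst z)) (snd z) (snd (fst z))}"
    unfolding large_cluster_event_def space_rooted_perc_space card_ge_or_infinite_iff by (auto; blast)
  also have "\<dots> \<in> sets (rooted_perc_space p)"
  proof -
    have "countable {F :: nat set. finite F \<and> card F = k}"
      by (rule countable_subset[OF _ countable_Collect_finite]) auto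
    then show ?thesis using pred_rooted_perc_in_cluster by measurable
  qed
  finally show ?thesis .
qed

definition zeta_ge :: "(graph \<times> nat) measure \<Rightarrow> real \<Rightarrow> nat \<Rightarrow> real" where
  "zeta_ge \<mu> p k = measure (\<mu> \<Otimes>\<^sub>M perc_measure p) (large_cluster_event k)"

lemma local_explore_prob_eq_perc_measure:
  assumes loopless: "\<And>x. \<not> E x x" and lf: "locally_finite E"
  shows "local_explore_prob p k (E, v)
    = measure (perc_measure p) {\<omega>. explored_ge k (graph_of (edges_within (ball k E v) E)) \<omega> v}"
proof -
  define B where "B = ball k E v"
  define R where "R = edges_within B E"
  have finB: "finite B" using finite_ball[OF lf] by (simp add: B_def)
  have perc_eq: "perc (graph_of R) \<omega> = perc (graph_of R) \<omega>'"
    if "\<forall>x\<in>edge_slots B. \<omega> x = \<omega>' x" for \<omega> \<omega>'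
  proof (intro ext)
    fix x y
    have "(x, y) \<in> R \<Longrightarrow> (min x y, max x y) \<in> edge_slots B"
      using loopless by (cases "x = y") (auto simp: R_def edges_within_def edge_slots_def min_def max_def)
    then show "perc (graph_of R) \<omega> x y = perc (graph_of R) \<omega>' x y"
      using that by (auto simp: perc_def graph_of_def)
  qed
  have "measure (perc_measure p) {\<omega>. explored_ge k (graph_of R) \<omega> v}
      = measure_pmf.prob (bernoulli_cfg p (edge_slots B)) {\<omega>. explored_ge k (graph_of R) \<omega> v}"
    by (intro measure_perc_measure_eq_bernoulli_cfg finite_edge_slots finB)
      (simp only: explored_ge_def explored_def perc_eq)
  also have "\<dots> = local_explore_prob p k (E, v)"
    using finB root_in_ball[of v k E]
    by (simp add: local_explore_prob_def explore_prob_def B_def[symmetric] R_def[symmetric])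
  finally show ?thesis by (simp add: B_def R_def)
qed

lemma local_explore_prob_le_slice:
  assumes loopless: "\<And>x. \<not> E x x" and lf: "locally_finite E"
  shows "local_explore_prob p k (E, v) \<le> measure (perc_measure p) (Pair (E, v) -` large_cluster_event k)"
  unfolding local_explore_prob_eq_perc_measure[OF assms]
proof (rule finite_measure.finite_measure_mono[OF prob_space.finite_measure[OF prob_space_perc_measure]])
  show "Pair (E, v) -` large_cluster_event k \<in> sets (perc_measure p)"
    using sets_Pair1[OF large_cluster_event_sets[of k p, unfolded rooted_perc_space_def]] .
  have "perc (graph_of (edges_within (ball k E v) E)) \<omega> x y \<Longrightarrow> perc E \<omega> x y" for \<omega> x y
    by (auto simp: perc_def graph_of_def edges_within_def)
  then have "explored_ge k E \<omega> v" if "explored_ge k (graph_of (edges_within (ball k E v) E)) \<omega> v" for \<omega>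
    using that by (rule explored_ge_mono)
  then show "{\<omega>. explored_ge k (graph_of (edges_within (ball k E v) E)) \<omega> v}
      \<subseteq> Pair (E, v) -` large_cluster_event k"
    using card_cluster_ge_if_explored_ge by (auto simp: large_cluster_event_def)
qed

lemma integral_local_explore_prob_le_zeta_ge:
  assumes mu_prob: "prob_space \<mu>" and mu_sets: "sets \<mu> = sets rg_space"
    and mu_graphs: "AE x in \<mu>. simple_graph (fst x) \<and> locally_finite (fst x)"
  shows "(\<integral>x. local_explore_prob p k x \<partial>\<mu>) \<le> zeta_ge \<mu> p k"
proof -
  interpret mu: prob_space \<mu> by (rule mu_prob)
  interpret perc: prob_space "perc_measure p" by (rule prob_space_perc_measure)
  have meas: "local_explore_prob p k \<in> borel_measurable \<mu>"
    using local_explore_prob_measurable measurable_cong_sets[OF mu_sets refl] by blast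
  have int: "integrable \<mu> (local_explore_prob p k)"
    by (rule mu.integrable_const_bound[where B=1])
      (use local_explore_prob_nonneg local_explore_prob_le_1 meas in auto)
  have sets: "large_cluster_event k \<in> sets (\<mu> \<Otimes>\<^sub>M perc_measure p)"
    using large_cluster_event_sets[of k p] sets_pair_measure_cong[OF mu_sets refl, of "perc_measure p"]
    by (simp add: rooted_perc_space_def)
  have "ennreal (\<integral>x. local_explore_prob p k x \<partial>\<mu>) = (\<integral>\<^sup>+x. ennreal (local_explore_prob p k x) \<partial>\<mu>)"
    using int local_explore_prob_nonneg by (intro nn_integral_eq_integral[symmetric]) auto
  also have "\<dots> \<le> (\<integral>\<^sup>+x. emeasure (perc_measure p) (Pair x -` large_cluster_event k) \<partial>\<mu>)"
    using mu_graphs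
  proof (intro nn_integral_mono_AE, eventually_elim)
    case (elim x)
    obtain E v where x: "x = (E, v)" by (cases x)
    then have "local_explore_prob p k x \<le> measure (perc_measure p) (Pair x -` large_cluster_event k)"
      using elim local_explore_prob_le_slice[of E p k v] by (simp add: simple_graph_def)
    then show ?case by (simp add: perc.emeasure_eq_measure)
  qed
  also have "\<dots> = emeasure (\<mu> \<Otimes>\<^sub>M perc_measure p) (large_cluster_event k)"
    by (rule perc.emeasure_pair_measure_alt[symmetric]) (rule sets)
  also have "\<dots> = ennreal (zeta_ge \<mu> p k)"
    unfolding zeta_ge_def
    by (rule finite_measure.emeasure_eq_measure[OF prob_space.finite_measure])
      (rule prob_space_pair[OF mu_prob prob_space_perc_measure])
  finally show ?thesis by (simp add: zeta_ge_def)
qed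

lemma zeta_ge_tendsto_zeta:
  assumes mu_prob: "prob_space \<mu>" and mu_sets: "sets \<mu> = sets rg_space"
  shows "zeta_ge \<mu> p \<longlonglongrightarrow> zeta \<mu> p"
proof -
  interpret prob_space "\<mu> \<Otimes>\<^sub>M perc_measure p"
    by (rule prob_space_pair[OF mu_prob prob_space_perc_measure])
  have "sets (\<mu> \<Otimes>\<^sub>M perc_measure p) = sets (rooted_perc_space p)"
    using sets_pair_measure_cong[OF mu_sets refl, of "perc_measure p"] by (simp add: rooted_perc_space_def)
  then have "range large_cluster_event \<subseteq> events" using large_cluster_event_sets by auto
  moreover have "decseq large_cluster_event"
    by (rule decseq_SucI) (auto simp: large_cluster_event_def)
  moreover have "(\<Inter>k. large_cluster_event k) = {((E, rt), \<omega>). infinite (cluster E \<omega> rt)}"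
    by (auto simp: large_cluster_event_def) (meson Suc_n_not_le_n)
  ultimately show ?thesis
    unfolding zeta_ge_def[abs_def] zeta_def by (metis finite_Lim_measure_decseq)
qed

lemma zeta_nonneg: "0 \<le> zeta \<mu> p"
  by (simp add: zeta_def)

lemma measure_bind_pmf_eq_integral:
  "measure_pmf.prob (bind_pmf M N) A = (\<integral>x. measure_pmf.prob (N x) A \<partial>M)"
proof -
  have "integrable M (\<lambda>x. measure_pmf.prob (N x) A)"
    by (rule measure_pmf.integrable_const_bound[where B=1]) auto
  then have "ennreal (\<integral>x. measure_pmf.prob (N x) A \<partial>M) = (\<integral>\<^sup>+x. emeasure (N x) A \<partial>M)"
    by (simp add: nn_integral_eq_integral measure_pmf.emeasure_eq_measure)
  also have "\<dots> = ennreal (measure_pmf.prob (bind_pmf M N) A)"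
    by (simp add: measure_pmf.emeasure_eq_measure[symmetric])
  finally show ?thesis by simp
qed

lemma measure_pair_pmf_eq_integral:
  "measure_pmf.prob (pair_pmf A B) S = (\<integral>a. measure_pmf.prob B {b. (a, b) \<in> S} \<partial>A)"
proof -
  have "pair_pmf A B = bind_pmf A (\<lambda>a. map_pmf (Pair a) B)"
    by (simp add: pair_pmf_def map_pmf_def)
  then show ?thesis by (simp add: measure_bind_pmf_eq_integral vimage_def)
qed

lemma measure_pair_pmf_fst: "measure_pmf.prob (pair_pmf X U) {z. fst z \<in> A} = measure_pmf.prob X A"
proof -
  have "measure_pmf.prob X A = measure_pmf.prob (map_pmf fst (pair_pmf X U)) A"
    by (simp add: map_fst_pair_pmf)
  then show ?thesis by (simp add: vimage_def)
qed

lemma measure_pair_pmf_pair_fst: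
  "measure_pmf.prob (pair_pmf X (pair_pmf U V)) {z. (fst z, fst (snd z)) \<in> A} = measure_pmf.prob (pair_pmf X U) A"
proof -
  have "map_pmf (\<lambda>(x, y). (id x, fst y)) (pair_pmf X (pair_pmf U V)) = pair_pmf X U"
    by (simp add: map_pair map_fst_pair_pmf)
  then have "measure_pmf.prob (pair_pmf X U) A
      = measure_pmf.prob (pair_pmf X (pair_pmf U V)) ((\<lambda>(x, y). (id x, fst y)) -` A)"
    by (metis measure_map_pmf)
  also have "(\<lambda>(x, y). (id x, fst y)) -` A = {z. (fst z, fst (snd z)) \<in> A}" by auto
  finally show ?thesis by simp
qed

lemma measure_pair_pmf_pair_snd:
  "measure_pmf.prob (pair_pmf X (pair_pmf U V)) {z. (fst z, snd (snd z)) \<in> A} = measure_pmf.prob (pair_pmf X V) A"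
proof -
  have "map_pmf (\<lambda>(x, y). (id x, snd y)) (pair_pmf X (pair_pmf U V)) = pair_pmf X V"
    by (simp add: map_pair map_snd_pair_pmf)
  then have "measure_pmf.prob (pair_pmf X V) A
      = measure_pmf.prob (pair_pmf X (pair_pmf U V)) ((\<lambda>(x, y). (id x, snd y)) -` A)"
    by (metis measure_map_pmf)
  also have "(\<lambda>(x, y). (id x, snd y)) -` A = {z. (fst z, snd (snd z)) \<in> A}" by auto
  finally show ?thesis by simp
qed

lemma abs_integral_diff_le_concentration:
  fixes M :: "'a pmf" and X :: "'a \<Rightarrow> real"
  assumes "0 \<le> \<delta>" and bound: "\<And>x. x \<in> set_pmf M \<Longrightarrow> \<bar>X x - c\<bar> \<le> 1"
  shows "\<bar>(\<integral>x. X x \<partial>M) - c\<bar> \<le> \<delta> + measure_pmf.prob M {x. \<delta> < \<bar>X x - c\<bar>}"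
proof -
  let ?bad = "{x. \<delta> < \<bar>X x - c\<bar>}"
  have int: "integrable M (\<lambda>x. X x - c)"
    by (rule measure_pmf.integrable_const_bound[where B=1]) (auto intro: AE_pmfI bound)
  have "integrable M X"
  proof (rule measure_pmf.integrable_const_bound[where B="\<bar>c\<bar> + 1"])
    show "AE x in M. norm (X x) \<le> \<bar>c\<bar> + 1" by (rule AE_pmfI) (use bound in force)
  qed simp
  then have "\<bar>(\<integral>x. X x \<partial>M) - c\<bar> = \<bar>\<integral>x. X x - c \<partial>M\<bar>"
    by (simp add: Bochner_Integration.integral_diff measure_pmf.prob_space)
  also have "\<dots> \<le> (\<integral>x. \<bar>X x - c\<bar> \<partial>M)" by (rule integral_abs_bound)
  also have "\<dots> \<le> (\<integral>x. \<delta> + indicator ?bad x \<partial>M)"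
  proof (rule integral_mono_AE)
    show "integrable M (\<lambda>x. \<bar>X x - c\<bar>)" using int by simp
    show "integrable M (\<lambda>x. \<delta> + indicator ?bad x)"
      by (rule measure_pmf.integrable_const_bound[where B="\<bar>\<delta>\<bar> + 1"]) (auto simp: indicator_def)
    show "AE x in M. \<bar>X x - c\<bar> \<le> \<delta> + indicator ?bad x"
      by (rule AE_pmfI) (use bound \<open>0 \<le> \<delta>\<close> in \<open>force simp: indicator_def\<close>)
  qed
  also have "\<dots> = \<delta> + measure_pmf.prob M ?bad"
    by (subst Bochner_Integration.integral_add)
      (auto simp: measure_pmf.prob_space measure_pmf.integrable_const_bound[where B=1])
  finally show ?thesis .
qed

lemma limsup_tendsto_0I:
  fixes X :: "nat \<Rightarrow> nat \<Rightarrow> real" and B :: "nat \<Rightarrow> real"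
  assumes nonneg: "\<And>k n. 0 \<le> X k n"
    and bound: "\<And>k \<epsilon>. \<epsilon> > 0 \<Longrightarrow> eventually (\<lambda>n. X k n \<le> B k + \<epsilon>) sequentially"
    and B: "B \<longlonglongrightarrow> 0"
  shows "(\<lambda>k. limsup (\<lambda>n. ereal (X k n))) \<longlonglongrightarrow> 0"
proof (rule tendsto_sandwich[of "\<lambda>_. 0" _ _ "\<lambda>k. ereal (B k)"])
  show "\<forall>\<^sub>F k in sequentially. 0 \<le> limsup (\<lambda>n. ereal (X k n))"
    by (intro always_eventually allI le_Limsup) (auto simp: nonneg)
  have "limsup (\<lambda>n. ereal (X k n)) \<le> ereal (B k)" for k
  proof (rule ereal_le_epsilon2)
    fix \<epsilon> :: real assume "0 < \<epsilon>"
    have "limsup (\<lambda>n. ereal (X k n)) \<le> ereal (B k + \<epsilon>)"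
      by (rule Limsup_bounded) (use bound[OF \<open>0 < \<epsilon>\<close>, of k] in \<open>auto elim: eventually_mono\<close>)
    then show "limsup (\<lambda>n. ereal (X k n)) \<le> ereal (B k) + ereal \<epsilon>" by simp
  qed
  then show "\<forall>\<^sub>F k in sequentially. limsup (\<lambda>n. ereal (X k n)) \<le> ereal (B k)" by simp
  show "(\<lambda>k. ereal (B k)) \<longlonglongrightarrow> 0" using B by (simp add: zero_ereal_def tendsto_ereal)
qed simp

section \<open>Finite graphs with a largest cluster\<close>

abbreviation rooted_perc_exp :: "(nat \<Rightarrow> graph pmf) \<Rightarrow> real \<Rightarrow> nat \<Rightarrow> ((graph \<times> perc_cfg) \<times> nat) pmf" where
  "rooted_perc_exp Gs p n \<equiv> pair_pmf (perc_exp Gs p n) (pmf_of_set {..<n})"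

abbreviation birooted_perc_exp ::
    "(nat \<Rightarrow> graph pmf) \<Rightarrow> real \<Rightarrow> nat \<Rightarrow> ((graph \<times> perc_cfg) \<times> nat \<times> nat) pmf" where
  "birooted_perc_exp Gs p n \<equiv> pair_pmf (perc_exp Gs p n) (pair_pmf (pmf_of_set {..<n}) (pmf_of_set {..<n}))"

abbreviation large_cluster_roots :: "nat \<Rightarrow> ((graph \<times> perc_cfg) \<times> nat) set" where
  "large_cluster_roots k \<equiv> {((E, \<omega>), v). card (cluster E \<omega> v) \<ge> k}"

abbreviation large_roots_outside ::
    "(graph \<Rightarrow> perc_cfg \<Rightarrow> nat set) \<Rightarrow> nat \<Rightarrow> ((graph \<times> perc_cfg) \<times> nat) set" where
  "large_roots_outside C k \<equiv> {((E, \<omega>), v). v \<notin> C E \<omega> \<and> card (cluster E \<omega> v) \<ge> k}"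

abbreviation two_large_clusters :: "nat \<Rightarrow> ((graph \<times> perc_cfg) \<times> nat \<times> nat) set" where
  "two_large_clusters k \<equiv> {((E, \<omega>), (u, v)).
     card (cluster E \<omega> u) \<ge> k \<and> card (cluster E \<omega> v) \<ge> k \<and> cluster E \<omega> u \<noteq> cluster E \<omega> v}"

lemma set_pmf_perc_exp_fst: "x \<in> set_pmf (perc_exp Gs p n) \<Longrightarrow> fst x \<in> set_pmf (Gs n)"
  by (auto simp: perc_exp_def)

lemma prob_card_cluster_ge_le_average:
  assumes Gs_on: "\<And>E. E \<in> set_pmf (Gs n) \<Longrightarrow> graph_on n E" and n: "n \<ge> 1"
  shows "measure_pmf.prob (rooted_perc_exp Gs p n) (large_cluster_roots k)
     \<le> (\<integral>E. (\<Sum>v<n. local_explore_prob p k (E, v)) / real n \<partial>Gs n)"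
proof -
  let ?S = "large_cluster_roots k"
  let ?X = "perc_exp Gs p n"
  have int: "integrable (Gs n) (\<lambda>E. local_explore_prob p k (E, v))" for v
    by (rule measure_pmf.integrable_const_bound[where B=1])
      (auto simp: local_explore_prob_nonneg local_explore_prob_le_1)
  have "measure_pmf.prob ?X {x. (x, v) \<in> ?S} \<le> (\<integral>E. local_explore_prob p k (E, v) \<partial>Gs n)"
    if "v < n" for v
  proof -
    have "measure_pmf.prob ?X {x. (x, v) \<in> ?S}
        = (\<integral>E. measure_pmf.prob (perc_pmf n p) {\<omega>. k \<le> card (cluster E \<omega> v)} \<partial>Gs n)"
      unfolding perc_exp_def measure_bind_pmf_eq_integral by (simp add: vimage_def)
    also have "\<dots> \<le> (\<integral>E. local_explore_prob p k (E, v) \<partial>Gs n)"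
      using int prob_card_cluster_ge_le_local Gs_on that
      by (intro integral_mono_AE AE_pmfI measure_pmf.integrable_const_bound[where B=1])
        (auto simp: local_explore_prob_nonneg local_explore_prob_le_1)
    finally show ?thesis .
  qed
  then have "(\<Sum>v<n. measure_pmf.prob ?X {x. (x, v) \<in> ?S}) / real n
      \<le> (\<Sum>v<n. \<integral>E. local_explore_prob p k (E, v) \<partial>Gs n) / real n"
    by (intro divide_right_mono sum_mono) auto
  moreover have "measure_pmf.prob (rooted_perc_exp Gs p n) ?S
      = (\<Sum>v<n. measure_pmf.prob ?X {x. (x, v) \<in> ?S}) / real n"
  proof -
    have "measure_pmf.prob (rooted_perc_exp Gs p n) ?S
        = measure_pmf.prob (pair_pmf (pmf_of_set {..<n}) ?X) ((\<lambda>(x, y). (y, x)) -` ?S)"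
      by (subst pair_commute_pmf) simp
    also have "\<dots> = (\<integral>v. measure_pmf.prob ?X {x. (x, v) \<in> ?S} \<partial>pmf_of_set {..<n})"
      by (simp add: measure_pair_pmf_eq_integral vimage_def)
    moreover have "{..<n} \<noteq> {}" using n by (auto simp: lessThan_empty_iff)
    ultimately show ?thesis by (simp add: integral_pmf_of_set)
  qed
  ultimately show ?thesis using int by (simp add: Bochner_Integration.integral_sum)
qed

lemma eventually_average_local_explore_prob_le:
  assumes lwc: "lwc_in_prob Gs \<mu>" and mu_prob: "prob_space \<mu>" and mu_sets: "sets \<mu> = sets rg_space"
    and "\<epsilon> > 0"
  shows "eventually (\<lambda>n. (\<integral>E. (\<Sum>v<n. local_explore_prob p k (E, v)) / real n \<partial>Gs n)
           \<le> (\<integral>x. local_explore_prob p k x \<partial>\<mu>) + \<epsilon>) sequentially"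
proof -
  interpret mu: prob_space \<mu> by (rule mu_prob)
  define I where "I = (\<integral>x. local_explore_prob p k x \<partial>\<mu>)"
  define avg where "avg n E = (\<Sum>v<n. local_explore_prob p k (E, v)) / real n" for n E
  have meas: "local_explore_prob p k \<in> borel_measurable \<mu>"
    using local_explore_prob_measurable measurable_cong_sets[OF mu_sets refl] by blast
  have I_nonneg: "0 \<le> I" unfolding I_def by (rule integral_nonneg_AE) (simp add: local_explore_prob_nonneg)
  have I_le_1: "I \<le> 1" unfolding I_def
    by (intro mu.integral_le_const AE_I2 mu.integrable_const_bound[where B=1])
      (use meas local_explore_prob_nonneg local_explore_prob_le_1 in auto)
  have avg_bounds: "0 \<le> avg n E \<and> avg n E \<le> 1" for n E
    using sum_mono[of "{..<n}" "\<lambda>v. local_explore_prob p k (E, v)" "\<lambda>_. 1"]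
    by (auto simp: avg_def local_explore_prob_nonneg local_explore_prob_le_1 sum_nonneg divide_le_eq)
  have "\<bar>avg n E - I\<bar> \<le> 1" for n E using avg_bounds[of n E] I_nonneg I_le_1 by linarith
  then have close: "\<bar>(\<integral>E. avg n E \<partial>Gs n) - I\<bar> \<le> \<epsilon>/2 + measure_pmf.prob (Gs n) {E. \<epsilon>/2 < \<bar>avg n E - I\<bar>}"
    for n using \<open>\<epsilon> > 0\<close> by (intro abs_integral_diff_le_concentration) auto
  have "bounded (range (local_explore_prob p k))"
    unfolding bounded_iff using local_explore_prob_nonneg local_explore_prob_le_1
    by (auto intro!: exI[of _ 1])
  then have "(\<lambda>n. measure_pmf.prob (Gs n) {E. \<epsilon>/2 < \<bar>avg n E - I\<bar>}) \<longlonglongrightarrow> 0"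
    using lwc local_fun_local_explore_prob local_explore_prob_measurable \<open>\<epsilon> > 0\<close>
    unfolding lwc_in_prob_def avg_def I_def by (meson half_gt_zero)
  then have "eventually (\<lambda>n. measure_pmf.prob (Gs n) {E. \<epsilon>/2 < \<bar>avg n E - I\<bar>} < \<epsilon>/2) sequentially"
    using \<open>\<epsilon> > 0\<close> by (intro order_tendstoD(2)) auto
  then show ?thesis
  proof eventually_elim
    case (elim n)
    then show ?case using close[of n] unfolding avg_def I_def by linarith
  qed
qed

lemma prob_two_large_clusters_le_tail:
  "measure_pmf.prob (birooted_perc_exp Gs p n) (two_large_clusters k)
    \<le> measure_pmf.prob (rooted_perc_exp Gs p n) (large_cluster_roots k)"
proof -
  have "measure_pmf.prob (birooted_perc_exp Gs p n) (two_large_clusters k)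
    \<le> measure_pmf.prob (birooted_perc_exp Gs p n)
      {z. (fst z, fst (snd z)) \<in> large_cluster_roots k}"
    by (rule measure_pmf.finite_measure_mono) auto
  then show ?thesis by (simp only: measure_pair_pmf_pair_fst)
qed

locale largest_clusters =
  fixes Gs :: "nat \<Rightarrow> graph pmf" and C1 :: "nat \<Rightarrow> graph \<Rightarrow> perc_cfg \<Rightarrow> nat set"
  assumes graph_on_Gs: "\<And>n E. E \<in> set_pmf (Gs n) \<Longrightarrow> graph_on n E"
    and largest_C1: "\<And>n E \<omega>. n \<ge> 1 \<Longrightarrow> is_largest_cluster n E \<omega> (C1 n E \<omega>)"
begin

lemma C1_subset:
  assumes "n \<ge> 1" "E \<in> set_pmf (Gs n)"
  shows "C1 n E \<omega> \<subseteq> {..<n}"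
proof -
  obtain w where "w < n" "C1 n E \<omega> = cluster E \<omega> w"
    using largest_C1[OF assms(1), of E \<omega>] by (auto simp: is_largest_cluster_def)
  then show ?thesis using cluster_subset_graph_on[OF graph_on_Gs[OF assms(2)]] by simp
qed

lemma cluster_eq_C1:
  assumes "n \<ge> 1" "E \<in> set_pmf (Gs n)" "v \<in> C1 n E \<omega>"
  shows "cluster E \<omega> v = C1 n E \<omega>"
  using largest_C1[OF assms(1), of E \<omega>] cluster_eq_if_mem[OF graph_on_Gs[OF assms(2)]] assms(3)
  by (auto simp: is_largest_cluster_def)

lemma prob_in_C1_eq_integral:
  assumes n: "n \<ge> 1"
  shows "measure_pmf.prob (rooted_perc_exp Gs p n) {((E, \<omega>), v). v \<in> C1 n E \<omega>}
       = (\<integral>x. real (card (C1 n (fst x) (snd x))) / real n \<partial>perc_exp Gs p n)"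
proof -
  have "measure_pmf.prob (rooted_perc_exp Gs p n) {((E, \<omega>), v). v \<in> C1 n E \<omega>}
      = (\<integral>x. measure_pmf.prob (pmf_of_set {..<n}) (C1 n (fst x) (snd x)) \<partial>perc_exp Gs p n)"
    by (simp add: measure_pair_pmf_eq_integral case_prod_beta)
  also have "\<dots> = (\<integral>x. real (card (C1 n (fst x) (snd x))) / real n \<partial>perc_exp Gs p n)"
  proof (intro integral_cong_AE AE_pmfI)
    fix x assume "x \<in> set_pmf (perc_exp Gs p n)"
    then have "C1 n (fst x) (snd x) \<subseteq> {..<n}" by (intro C1_subset[OF n] set_pmf_perc_exp_fst)
    moreover have "{..<n} \<noteq> {}" using n by (auto simp: lessThan_empty_iff)
    ultimately show "measure_pmf.prob (pmf_of_set {..<n}) (C1 n (fst x) (snd x))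
        = real (card (C1 n (fst x) (snd x))) / real n"
      by (simp add: measure_pmf_of_set Int_absorb1)
  qed simp_all
  finally show ?thesis .
qed

text \<open>If |C1| \<ge> k then every root in C1 has a large cluster, so the large-cluster roots
  outside C1 have mass P(large) - P(in C1), up to the event |C1| < k.\<close>

lemma prob_outside_C1_le:
  fixes p :: real and k :: nat
  assumes n: "n \<ge> 1"
  defines "P \<equiv> measure_pmf.prob (rooted_perc_exp Gs p n)"
  shows "P (large_roots_outside (C1 n) k)
     \<le> P (large_cluster_roots k) - P {((E, \<omega>), v). v \<in> C1 n E \<omega>}
       + P {((E, \<omega>), v). card (C1 n E \<omega>) < k}"
proof -
  define Large where "Large = large_cluster_roots k"
  define In where "In = {((E, \<omega>), v). v \<in> C1 n E \<omega>}"
  define Small where "Small = {((E, \<omega>), v::nat). card (C1 n E \<omega>) < k}"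
  have "In \<inter> set_pmf (rooted_perc_exp Gs p n) \<subseteq> (Large \<inter> In) \<union> Small"
  proof
    fix z assume z: "z \<in> In \<inter> set_pmf (rooted_perc_exp Gs p n)"
    obtain E \<omega> v where zz: "z = ((E, \<omega>), v)" by (metis prod.collapse)
    from z have "v \<in> C1 n E \<omega>" "E \<in> set_pmf (Gs n)" by (auto simp: zz In_def perc_exp_def)
    then show "z \<in> (Large \<inter> In) \<union> Small"
      using cluster_eq_C1[OF n] by (auto simp: zz Large_def In_def Small_def)
  qed
  then have "P In \<le> P ((Large \<inter> In) \<union> Small)"
    unfolding P_def measure_Int_set_pmf[symmetric, of _ In] by (rule measure_pmf.finite_measure_mono) simp
  also have "\<dots> \<le> P (Large \<inter> In) + P Small"
    unfolding P_def by (rule measure_subadditive) (auto simp: measure_pmf.emeasure_finite)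
  finally have "P In \<le> P (Large \<inter> In) + P Small" .
  moreover have "P (Large - In) = P Large - P (Large \<inter> In)"
    unfolding P_def by (rule measure_pmf.finite_measure_Diff') auto
  moreover have "large_roots_outside (C1 n) k = Large - In"
    by (auto simp: Large_def In_def)
  ultimately show ?thesis by (simp add: Large_def In_def Small_def)
qed

lemma prob_two_large_clusters_le_outside_C1:
  assumes n: "n \<ge> 1"
  shows "measure_pmf.prob (birooted_perc_exp Gs p n) (two_large_clusters k)
    \<le> 2 * measure_pmf.prob (rooted_perc_exp Gs p n)
           (large_roots_outside (C1 n) k)"
proof -
  let ?M = "birooted_perc_exp Gs p n"
  define Out where "Out = large_roots_outside (C1 n) k"
  define Two where "Two = two_large_clusters k"
  have "Two \<inter> set_pmf ?M \<subseteq> {z. (fst z, fst (snd z)) \<in> Out} \<union> {z. (fst z, snd (snd z)) \<in> Out}"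
  proof
    fix z assume z: "z \<in> Two \<inter> set_pmf ?M"
    obtain E \<omega> u v where zz: "z = ((E, \<omega>), (u, v))" by (metis prod.collapse)
    have "E \<in> set_pmf (Gs n) \<Longrightarrow> u \<in> C1 n E \<omega> \<Longrightarrow> v \<in> C1 n E \<omega> \<Longrightarrow> cluster E \<omega> u = cluster E \<omega> v"
      using cluster_eq_C1[OF n] by simp
    then show "z \<in> {z. (fst z, fst (snd z)) \<in> Out} \<union> {z. (fst z, snd (snd z)) \<in> Out}"
      using z by (auto simp: zz Two_def Out_def perc_exp_def)
  qed
  then have "measure_pmf.prob ?M Two
      \<le> measure_pmf.prob ?M ({z. (fst z, fst (snd z)) \<in> Out} \<union> {z. (fst z, snd (snd z)) \<in> Out})"
    unfolding measure_Int_set_pmf[symmetric, of _ Two] by (rule measure_pmf.finite_measure_mono) simp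
  also have "\<dots> \<le> measure_pmf.prob ?M {z. (fst z, fst (snd z)) \<in> Out} + measure_pmf.prob ?M {z. (fst z, snd (snd z)) \<in> Out}"
    by (rule measure_subadditive) (auto simp: measure_pmf.emeasure_finite)
  also have "\<dots> = 2 * measure_pmf.prob (rooted_perc_exp Gs p n) Out"
    by (simp add: measure_pair_pmf_pair_fst measure_pair_pmf_pair_snd)
  finally show ?thesis by (simp add: Two_def Out_def)
qed

end

section \<open>Large clusters outside the giant\<close>

lemma half_lt_abs_ratio_diff:
  fixes z :: real
  assumes z: "0 < z" and n: "2 * real k / z < real n" and "c < k"
  shows "z / 2 < \<bar>real c / real n - z\<bar>"
proof -
  have "0 < real n" using n z by (smt (verit) divide_nonneg_pos of_nat_0_le_iff)
  moreover have "real c < z / 2 * real n" using n z \<open>c < k\<close> by (simp add: field_simps)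
  ultimately have "real c / real n < z / 2" by (simp add: divide_less_eq)
  then show ?thesis by linarith
qed

lemma zeta_le_1: "prob_space \<mu> \<Longrightarrow> zeta \<mu> p \<le> 1"
  unfolding zeta_def by (rule prob_space.prob_le_1[OF prob_space_pair[OF _ prob_space_perc_measure]])

locale giant_setting = largest_clusters +
  fixes p :: real and \<mu> :: "(graph \<times> nat) measure"
  assumes mu_prob: "prob_space \<mu>" and mu_sets: "sets \<mu> = sets rg_space"
    and mu_graphs: "AE x in \<mu>. simple_graph (fst x) \<and> locally_finite (fst x)"
    and giant: "converging_giant Gs \<mu> p C1"
begin

lemma eventually_tail_le:
  assumes "\<epsilon> > 0"
  shows "eventually (\<lambda>n. measure_pmf.prob (rooted_perc_exp Gs p n)
           (large_cluster_roots k) \<le> zeta_ge \<mu> p k + \<epsilon>) sequentially"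
proof -
  have "lwc_in_prob Gs \<mu>" using giant by (simp add: converging_giant_def)
  show ?thesis
    using eventually_average_local_explore_prob_le[OF \<open>lwc_in_prob Gs \<mu>\<close> mu_prob mu_sets assms, of p k]
      eventually_ge_at_top[of 1]
  proof eventually_elim
    case (elim n)
    have "measure_pmf.prob (rooted_perc_exp Gs p n) (large_cluster_roots k)
        \<le> (\<integral>E. (\<Sum>v<n. local_explore_prob p k (E, v)) / real n \<partial>Gs n)"
      using graph_on_Gs elim(2) by (rule prob_card_cluster_ge_le_average)
    also have "\<dots> \<le> (\<integral>x. local_explore_prob p k x \<partial>\<mu>) + \<epsilon>" by (rule elim(1))
    also have "\<dots> \<le> zeta_ge \<mu> p k + \<epsilon>"
      using integral_local_explore_prob_le_zeta_ge[OF mu_prob mu_sets mu_graphs] by simp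
    finally show ?case .
  qed
qed

lemma eventually_prob_in_C1_ge:
  assumes "\<epsilon> > 0"
  shows "eventually (\<lambda>n. zeta \<mu> p - \<epsilon> \<le>
           measure_pmf.prob (rooted_perc_exp Gs p n) {((E, \<omega>), v). v \<in> C1 n E \<omega>}) sequentially"
proof -
  define Y where "Y n x = real (card (C1 n (fst x) (snd x))) / real n" for n x
  have "(\<lambda>n. measure_pmf.prob (perc_exp Gs p n) {x. \<epsilon>/2 < \<bar>Y n x - zeta \<mu> p\<bar>}) \<longlonglongrightarrow> 0"
    using giant \<open>\<epsilon> > 0\<close> unfolding converging_giant_def Y_def case_prod_beta by (meson half_gt_zero)
  then have "eventually (\<lambda>n. measure_pmf.prob (perc_exp Gs p n) {x. \<epsilon>/2 < \<bar>Y n x - zeta \<mu> p\<bar>} < \<epsilon>/2)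
      sequentially"
    using \<open>\<epsilon> > 0\<close> by (intro order_tendstoD(2)) auto
  then show ?thesis
    using eventually_ge_at_top[of 1]
  proof eventually_elim
    case (elim n)
    have "\<bar>Y n x - zeta \<mu> p\<bar> \<le> 1" if "x \<in> set_pmf (perc_exp Gs p n)" for x
    proof -
      have "card (C1 n (fst x) (snd x)) \<le> n"
        using card_mono[OF _ C1_subset[OF elim(2) set_pmf_perc_exp_fst[OF that]]] by simp
      then have "0 \<le> Y n x \<and> Y n x \<le> 1" using elim(2) by (simp add: Y_def divide_le_eq)
      then show ?thesis using zeta_nonneg[of \<mu> p] zeta_le_1[OF mu_prob, of p] by linarith
    qed
    then have "\<bar>(\<integral>x. Y n x \<partial>perc_exp Gs p n) - zeta \<mu> p\<bar>
        \<le> \<epsilon>/2 + measure_pmf.prob (perc_exp Gs p n) {x. \<epsilon>/2 < \<bar>Y n x - zeta \<mu> p\<bar>}"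
      using \<open>\<epsilon> > 0\<close> by (intro abs_integral_diff_le_concentration) auto
    then show ?case using elim(1) prob_in_C1_eq_integral[OF elim(2)] by (simp add: Y_def)
  qed
qed

lemma eventually_prob_small_C1_le:
  assumes zeta_pos: "zeta \<mu> p > 0" and "\<epsilon> > 0"
  shows "eventually (\<lambda>n. measure_pmf.prob (rooted_perc_exp Gs p n)
           {((E, \<omega>), v). card (C1 n E \<omega>) < k} \<le> \<epsilon>) sequentially"
proof -
  define z where "z = zeta \<mu> p"
  define bad where "bad n = {(E, \<omega>). z/2 < \<bar>real (card (C1 n E \<omega>)) / real n - z\<bar>}" for n
  have "(\<lambda>n. measure_pmf.prob (perc_exp Gs p n) (bad n)) \<longlonglongrightarrow> 0"
    using giant zeta_pos unfolding converging_giant_def bad_def z_def by (meson half_gt_zero)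
  obtain N :: nat where N: "2 * real k / z < real N" using reals_Archimedean2 by blast
  have "eventually (\<lambda>n. measure_pmf.prob (perc_exp Gs p n) (bad n) < \<epsilon>) sequentially"
    using \<open>(\<lambda>n. measure_pmf.prob (perc_exp Gs p n) (bad n)) \<longlonglongrightarrow> 0\<close> \<open>\<epsilon> > 0\<close>
    by (intro order_tendstoD(2)) auto
  then show ?thesis
    using eventually_ge_at_top[of "Suc N"]
  proof eventually_elim
    case (elim n)
    have "2 * real k / z < real n" using N elim(2) by linarith
    then have "{x. card (C1 n (fst x) (snd x)) < k} \<subseteq> bad n"
      using zeta_pos half_lt_abs_ratio_diff[of z k n] by (auto simp: bad_def z_def)
    then have "measure_pmf.prob (perc_exp Gs p n) {x. card (C1 n (fst x) (snd x)) < k}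
        \<le> measure_pmf.prob (perc_exp Gs p n) (bad n)"
      by (rule measure_pmf.finite_measure_mono) simp
    moreover have "measure_pmf.prob (rooted_perc_exp Gs p n) {((E, \<omega>), v). card (C1 n E \<omega>) < k}
        = measure_pmf.prob (perc_exp Gs p n) {x. card (C1 n (fst x) (snd x)) < k}"
    proof -
      have "{((E, \<omega>), v::nat). card (C1 n E \<omega>) < k} = {z. fst z \<in> {x. card (C1 n (fst x) (snd x)) < k}}"
        by auto
      then show ?thesis by (simp only: measure_pair_pmf_fst)
    qed
    ultimately show ?case using elim(1) by linarith
  qed
qed

lemma eventually_outside_C1_le:
  assumes zeta_pos: "zeta \<mu> p > 0" and "\<epsilon> > 0"
  shows "eventually (\<lambda>n. measure_pmf.prob (rooted_perc_exp Gs p n)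
           (large_roots_outside (C1 n) k)
         \<le> zeta_ge \<mu> p k - zeta \<mu> p + \<epsilon>) sequentially"
proof -
  have e3: "\<epsilon>/3 > 0" using \<open>\<epsilon> > 0\<close> by simp
  show ?thesis
    using eventually_tail_le[OF e3, of k] eventually_prob_in_C1_ge[OF e3]
      eventually_prob_small_C1_le[OF zeta_pos e3, of k] eventually_ge_at_top[of 1]
  proof eventually_elim
    case (elim n)
    then show ?case using prob_outside_C1_le[OF elim(4), of p k] by simp
  qed
qed

lemma eventually_two_large_clusters_le:
  assumes zeta_pos: "zeta \<mu> p > 0" and "\<epsilon> > 0"
  shows "eventually (\<lambda>n. measure_pmf.prob (birooted_perc_exp Gs p n) (two_large_clusters k)
         \<le> 2 * (zeta_ge \<mu> p k - zeta \<mu> p) + \<epsilon>) sequentially"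
proof -
  have e2: "\<epsilon>/2 > 0" using \<open>\<epsilon> > 0\<close> by simp
  show ?thesis
    using eventually_outside_C1_le[OF zeta_pos e2, of k] eventually_ge_at_top[of 1]
  proof eventually_elim
    case (elim n)
    then show ?case using prob_two_large_clusters_le_outside_C1[OF elim(2), of p k] by simp
  qed
qed

lemma zeta_ge_minus_zeta_tendsto_0: "(\<lambda>k. zeta_ge \<mu> p k - zeta \<mu> p) \<longlonglongrightarrow> 0"
  using tendsto_diff[OF zeta_ge_tendsto_zeta[OF mu_prob mu_sets, of p] tendsto_const[of "zeta \<mu> p"]]
  by simp

lemma outside_giant_vanishes:
  assumes "zeta \<mu> p > 0"
  shows "(\<lambda>k. limsup (\<lambda>n. ereal (measure_pmf.prob (rooted_perc_exp Gs p n)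
           (large_roots_outside (C1 n) k)))) \<longlonglongrightarrow> 0"
  using zeta_ge_minus_zeta_tendsto_0
  by (intro limsup_tendsto_0I[where B = "\<lambda>k. zeta_ge \<mu> p k - zeta \<mu> p"]
      eventually_outside_C1_le[OF assms]) simp_all

lemma tail_vanishes:
  assumes "zeta \<mu> p = 0"
  shows "(\<lambda>k. limsup (\<lambda>n. ereal (measure_pmf.prob (rooted_perc_exp Gs p n)
           (large_cluster_roots k)))) \<longlonglongrightarrow> 0"
  using zeta_ge_tendsto_zeta[OF mu_prob mu_sets, of p] assms
  by (intro limsup_tendsto_0I[where B = "zeta_ge \<mu> p"] eventually_tail_le) simp_all

lemma two_large_clusters_vanish:
  "(\<lambda>k. limsup (\<lambda>n. ereal (measure_pmf.prob
      (birooted_perc_exp Gs p n) (two_large_clusters k)))) \<longlonglongrightarrow> 0"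
proof (cases "zeta \<mu> p > 0")
  case True
  then show ?thesis
    using tendsto_mult_right_zero[OF zeta_ge_minus_zeta_tendsto_0, of 2]
    by (intro limsup_tendsto_0I[where B = "\<lambda>k. 2 * (zeta_ge \<mu> p k - zeta \<mu> p)"]
        eventually_two_large_clusters_le) simp_all
next
  case False
  then have "zeta_ge \<mu> p \<longlonglongrightarrow> 0"
    using zeta_ge_tendsto_zeta[OF mu_prob mu_sets, of p] zeta_nonneg[of \<mu> p] by simp
  moreover have "eventually (\<lambda>n. measure_pmf.prob (birooted_perc_exp Gs p n) (two_large_clusters k)
      \<le> zeta_ge \<mu> p k + \<epsilon>) sequentially" if "\<epsilon> > 0" for k \<epsilon>
    using eventually_tail_le[OF that, of k]
    by (rule eventually_mono) (erule order_trans[OF prob_two_large_clusters_le_tail])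
  ultimately show ?thesis by (intro limsup_tendsto_0I[where B = "zeta_ge \<mu> p"]) simp_all
qed

end

theorem proposition2p3:
  fixes p :: real
    and Gs :: "nat \<Rightarrow> graph pmf"
    and \<mu> :: "(graph \<times> nat) measure"
    and C1 :: "nat \<Rightarrow> graph \<Rightarrow> perc_cfg \<Rightarrow> nat set"
  assumes p: "0 \<le> p" "p \<le> 1"
    and mu_prob: "prob_space \<mu>"
    and mu_sets: "sets \<mu> = sets rg_space"
    and mu_graphs: "AE x in \<mu>. simple_graph (fst x) \<and> locally_finite (fst x)"
    and Gs_on: "\<And>n E. E \<in> set_pmf (Gs n) \<Longrightarrow> graph_on n E"
    and C1_largest: "\<And>n E \<omega>. n \<ge> 1 \<Longrightarrow> is_largest_cluster n E \<omega> (C1 n E \<omega>)"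
    and giant: "converging_giant Gs \<mu> p C1"
  shows
    "(zeta \<mu> p > 0 \<longrightarrow>
       (\<lambda>k. limsup (\<lambda>n. ereal (measure_pmf.prob
              (pair_pmf (perc_exp Gs p n) (pmf_of_set {..<n}))
              {((E, \<omega>), v). v \<notin> C1 n E \<omega> \<and> card (cluster E \<omega> v) \<ge> k})))
         \<longlonglongrightarrow> 0)
   \<and> (zeta \<mu> p = 0 \<longrightarrow>
       (\<lambda>k. limsup (\<lambda>n. ereal (measure_pmf.prob
              (pair_pmf (perc_exp Gs p n) (pmf_of_set {..<n}))
              {((E, \<omega>), v). card (cluster E \<omega> v) \<ge> k})))
         \<longlonglongrightarrow> 0)
   \<and> (\<lambda>k. limsup (\<lambda>n. ereal (measure_pmf.prob
              (pair_pmf (perc_exp Gs p n) (pair_pmf (pmf_of_set {..<n}) (pmf_of_set {..<n})))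
              {((E, \<omega>), (u, v)). card (cluster E \<omega> u) \<ge> k \<and> card (cluster E \<omega> v) \<ge> k
                                  \<and> cluster E \<omega> u \<noteq> cluster E \<omega> v})))
         \<longlonglongrightarrow> 0"
proof -
  interpret giant_setting Gs C1 p \<mu>
    using Gs_on C1_largest mu_prob mu_sets mu_graphs giant
    by (simp add: giant_setting_def giant_setting_axioms_def largest_clusters_def)
  show ?thesis using outside_giant_vanishes tail_vanishes two_large_clusters_vanish by blast
qed

end
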